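(* In the setting described in the context, $$\{y\in Y: |\phi_f^{-1}(\phi_f(y))\cap Y|>1\}=\varphi(Z).$$
   Context: Standing setting: $\Gamma$ countably infinite group, $n\in\mathbb N$, $\mathbb Z\Gamma$ its integral group ring (product $(fg)_t=\sum_sf_{ts^{-1}}g_s$, involution $(f^* )_s=f_{s^{-1}}$, for matrices $(f^* )^{(km)}=(f^{(mk)})^*$). $f=M-g\in M_n(\mathbb Z\Gamma)$ where $M=\mathrm{diag}(M_1,\dots,M_n)$ with positive integers $M_k$, $g=(g^{(km)})\in M_n(\mathbb Z\Gamma)$, $M_k>L_k:=\sum_{m\in[n]}\|g^{(km)}\|_1$ for all $k$, and there is a subsemigroup $P\subseteq\Gamma\setminus\{e_\Gamma\}$ containing $\mathrm{supp}(g^{(km)})$ for all $k,m$. Then $f$ is invertible in $M_n(\ell^1_{\mathbb R}(\Gamma))$. Put $\bar M=\max_kM_k$, $S_f=\prod_k\{0,\dots,M_k-1\}$, $Y=S_f^\Gamma$. Elements of $(\mathbb Z^n)^\Gamma$ are row vectors with entries $y_{s,k}$; products with matrices: $(yF)_m=\sum_ky_kF^{(km)}$ with convolution. $\|(f^* )^{-1}\|_{1,\infty}=\max_m\sum_k\|((f^* )^{-1})^{(km)}\|_1$. $\phi_f(y)=\pi(y(f^* )^{-1})$ where $\pi:(\mathbb R^\Gamma)^n\to((\mathbb R/\mathbb Z)^\Gamma)^n$ is the quotient map. Fix an integer $N\ge\bar M\|(f^* )^{-1}\|_{1,\infty}$, let $W=(\{-N,\dots,N\}^\Gamma)^n$,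 $V=W\setminus\{0\}$, $Z=\{(y,c)\in Y\times V: y+cf^*\in Y\}$, and $\varphi:Y\times V\to Y$ the projection. *)

theory Defs
  imports "HOL-Analysis.Analysis"
begin

(* The group Gamma is a type 'g of class group_add (NOT assumed commutative),
   written additively: identity 0, s^{-1} = -s, t s^{-1} = t - s.
   Matrices are functions nat => nat => ('g => _) indexed by k,m < n.
   Row vectors in (Z^n)^Gamma are functions 'g => nat => int, coordinate k < n,
   and 0 for k >= n. *)

definition supp :: "('g \<Rightarrow> 'a::zero) \<Rightarrow> 'g set" where
  "supp h = {s. h s \<noteq> 0}"

definition norm1_int :: "('g \<Rightarrow> int) \<Rightarrow> int" where
  "norm1_int h = (\<Sum>s\<in>supp h. \<bar>h s\<bar>)"

definition is_l1 :: "('g \<Rightarrow> real) \<Rightarrow> bool" where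
  "is_l1 h \<longleftrightarrow> (\<lambda>s. \<bar>h s\<bar>) summable_on UNIV"

definition norm1 :: "('g \<Rightarrow> real) \<Rightarrow> real" where
  "norm1 h = (\<Sum>\<^sub>\<infinity>s. \<bar>h s\<bar>)"

definition conv :: "('g::group_add \<Rightarrow> real) \<Rightarrow> ('g \<Rightarrow> real) \<Rightarrow> 'g \<Rightarrow> real" where
  "conv a b t = (\<Sum>\<^sub>\<infinity>s. a (t - s) * b s)"

definition conv_int :: "('g::group_add \<Rightarrow> int) \<Rightarrow> ('g \<Rightarrow> int) \<Rightarrow> 'g \<Rightarrow> int" where
  "conv_int a b t = (\<Sum>s\<in>supp b. a (t - s) * b s)"

definition star :: "('g::group_add \<Rightarrow> 'a) \<Rightarrow> 'g \<Rightarrow> 'a" where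
  "star h s = h (- s)"

definition mat_star :: "(nat \<Rightarrow> nat \<Rightarrow> 'g::group_add \<Rightarrow> 'a) \<Rightarrow> nat \<Rightarrow> nat \<Rightarrow> 'g \<Rightarrow> 'a" where
  "mat_star A k m = star (A m k)"

definition fmat :: "(nat \<Rightarrow> int) \<Rightarrow> (nat \<Rightarrow> nat \<Rightarrow> 'g::zero \<Rightarrow> int) \<Rightarrow> nat \<Rightarrow> nat \<Rightarrow> 'g \<Rightarrow> int" where
  "fmat M g k m s = (if k = m \<and> s = 0 then M k else 0) - g k m s"

definition mat_mult :: "nat \<Rightarrow> (nat \<Rightarrow> nat \<Rightarrow> 'g::group_add \<Rightarrow> real) \<Rightarrow> (nat \<Rightarrow> nat \<Rightarrow> 'g \<Rightarrow> real) \<Rightarrow> nat \<Rightarrow> nat \<Rightarrow> 'g \<Rightarrow> real" where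
  "mat_mult n A B k m = (\<lambda>t. \<Sum>j<n. conv (A k j) (B j m) t)"

definition mat_one :: "nat \<Rightarrow> nat \<Rightarrow> 'g::zero \<Rightarrow> real" where
  "mat_one k m s = (if k = m \<and> s = 0 then 1 else 0)"

definition is_l1_inverse :: "nat \<Rightarrow> (nat \<Rightarrow> nat \<Rightarrow> 'g::group_add \<Rightarrow> real) \<Rightarrow> (nat \<Rightarrow> nat \<Rightarrow> 'g \<Rightarrow> real) \<Rightarrow> bool" where
  "is_l1_inverse n A F \<longleftrightarrow>
     (\<forall>k<n. \<forall>m<n. is_l1 (F k m)) \<and>
     (\<forall>k<n. \<forall>m<n. mat_mult n F A k m = mat_one k m \<and> mat_mult n A F k m = mat_one k m)"

definition norm_1inf :: "nat \<Rightarrow> (nat \<Rightarrow> nat \<Rightarrow> 'g \<Rightarrow> real) \<Rightarrow> real" where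
  "norm_1inf n F = Max ((\<lambda>m. \<Sum>k<n. norm1 (F k m)) ` {..<n})"

definition Yset :: "nat \<Rightarrow> (nat \<Rightarrow> int) \<Rightarrow> ('g \<Rightarrow> nat \<Rightarrow> int) set" where
  "Yset n M = {y. \<forall>s k. (k < n \<longrightarrow> 0 \<le> y s k \<and> y s k < M k) \<and> (n \<le> k \<longrightarrow> y s k = 0)}"

(* phi_f(y) = pi(y (f^* )^{-1}); R/Z is represented by the fractional part in [0,1) *)
definition phi :: "nat \<Rightarrow> (nat \<Rightarrow> nat \<Rightarrow> 'g::group_add \<Rightarrow> real) \<Rightarrow> ('g \<Rightarrow> nat \<Rightarrow> int) \<Rightarrow> 'g \<Rightarrow> nat \<Rightarrow> real" where
  "phi n Finv y = (\<lambda>s m. if m < n then frac (\<Sum>k<n. conv (\<lambda>t. real_of_int (y t k)) (Finv k m) s) else 0)"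

definition vecmat_int :: "nat \<Rightarrow> ('g::group_add \<Rightarrow> nat \<Rightarrow> int) \<Rightarrow> (nat \<Rightarrow> nat \<Rightarrow> 'g \<Rightarrow> int) \<Rightarrow> 'g \<Rightarrow> nat \<Rightarrow> int" where
  "vecmat_int n c A = (\<lambda>s m. if m < n then (\<Sum>k<n. conv_int (\<lambda>t. c t k) (A k m) s) else 0)"

definition Wset :: "nat \<Rightarrow> int \<Rightarrow> ('g \<Rightarrow> nat \<Rightarrow> int) set" where
  "Wset n N = {c. \<forall>s k. (k < n \<longrightarrow> \<bar>c s k\<bar> \<le> N) \<and> (n \<le> k \<longrightarrow> c s k = 0)}"

definition Vset :: "nat \<Rightarrow> int \<Rightarrow> ('g \<Rightarrow> nat \<Rightarrow> int) set" where
  "Vset n N = Wset n N - {(\<lambda>s k. 0)}"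

definition Zset :: "nat \<Rightarrow> (nat \<Rightarrow> int) \<Rightarrow> (nat \<Rightarrow> nat \<Rightarrow> 'g::group_add \<Rightarrow> int) \<Rightarrow> int \<Rightarrow> (('g \<Rightarrow> nat \<Rightarrow> int) \<times> ('g \<Rightarrow> nat \<Rightarrow> int)) set" where
  "Zset n M g N = {(y, c). y \<in> Yset n M \<and> c \<in> Vset n N \<and>
      (\<lambda>s k. y s k + vecmat_int n c (mat_star (fmat M g)) s k) \<in> Yset n M}"

end

theory Submission
  imports Defs
begin

(* Let F be the inverse of f^* in M_n(l^1(Gamma)) and, for y, y' in Y, put e = (y' - y) F.
   Since phi_f(y) is y F read modulo Z and convolution with F is linear, phi_f(y') = phi_f(y)
   exactly when e is integer-valued.  Then c = e satisfies c f^* = (y' - y) F f^* = y' - y by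
   associativity, c is nonzero iff y' differs from y, and |c| <= Mbar ||F||_{1,infty} <= N since
   the entries of y' - y are smaller than Mbar in absolute value.  Conversely, if y' = y + c f^*
   then e = c f^* F = c is integer-valued.  Associativity of these mixed products is elementary
   here: one of the three factors is always finitely supported, so each interchange of
   summations involves a finite sum. *)

lemma infinite_or_card_gt_1_iff:
  assumes "x \<in> S"
  shows "infinite S \<or> 1 < card S \<longleftrightarrow> (\<exists>y\<in>S. y \<noteq> x)"
proof
  assume "infinite S \<or> 1 < card S"
  then have "S \<noteq> {x}"
    by auto
  with assms show "\<exists>y\<in>S. y \<noteq> x"
    by blast
next
  assume "\<exists>y\<in>S. y \<noteq> x"
  then obtain y where "y \<in> S" "y \<noteq> x"
    by blast
  with assms have "finite S \<Longrightarrow> card {x, y} \<le> card S"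
    by (intro card_mono) auto
  with \<open>y \<noteq> x\<close> show "infinite S \<or> 1 < card S"
    by auto
qed

lemma frac_eq_iff_diff_Ints: "frac x = frac y \<longleftrightarrow> x - y \<in> \<int>"
  using frac_diff_eq frac_diff_zero frac_eq_0_iff by metis

lemma summable_on_sum:
  fixes f :: "'i \<Rightarrow> 'a \<Rightarrow> 'b::topological_comm_monoid_add"
  assumes "finite I" "\<And>i. i \<in> I \<Longrightarrow> f i summable_on A"
  shows "(\<lambda>x. \<Sum>i\<in>I. f i x) summable_on A"
  using assms by (induction I rule: finite_induct) (auto intro: summable_on_add)

lemma infsum_sum:
  fixes f :: "'i \<Rightarrow> 'a \<Rightarrow> 'b::{topological_comm_monoid_add,t2_space}"
  assumes "finite I" "\<And>i. i \<in> I \<Longrightarrow> f i summable_on A"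
  shows "(\<Sum>\<^sub>\<infinity>x\<in>A. \<Sum>i\<in>I. f i x) = (\<Sum>i\<in>I. \<Sum>\<^sub>\<infinity>x\<in>A. f i x)"
  using assms
proof (induction I rule: finite_induct)
  case (insert i I)
  then show ?case
    by (simp add: infsum_add summable_on_sum)
qed simp

section \<open>Absolutely summable functions\<close>

lemma is_l1_finite_supp: "finite (supp b) \<Longrightarrow> is_l1 b"
  unfolding is_l1_def
  by (rule summable_on_cong_neutral[THEN iffD1, of _ "supp b"]) (auto simp: supp_def)

lemma is_l1_reindex:
  assumes "bij h" "is_l1 b"
  shows "is_l1 (\<lambda>v. b (h v))"
  using assms summable_on_reindex_bij_betw[of h UNIV UNIV "\<lambda>s. \<bar>b s\<bar>"]
  by (simp add: is_l1_def bij_betw_def)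

lemma is_l1_sum:
  assumes "finite I" "\<And>i. i \<in> I \<Longrightarrow> is_l1 (f i)"
  shows "is_l1 (\<lambda>x. \<Sum>i\<in>I. f i x)"
  unfolding is_l1_def
proof (rule summable_on_comparison_test)
  show "(\<lambda>x. \<Sum>i\<in>I. \<bar>f i x\<bar>) summable_on UNIV"
    using assms by (intro summable_on_sum) (auto simp: is_l1_def)
qed (auto simp: sum_abs)

lemma is_l1_mult_right: "is_l1 b \<Longrightarrow> is_l1 (\<lambda>x. b x * c)"
  unfolding is_l1_def by (simp add: abs_mult summable_on_cmult_left)

section \<open>Convolution\<close>

lemma conv_integrand_abs_summable:
  assumes "\<And>x. \<bar>a x\<bar> \<le> B" "is_l1 b"
  shows "(\<lambda>s. \<bar>a (t - s) * b s\<bar>) summable_on UNIV"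
proof (rule summable_on_comparison_test)
  show "(\<lambda>s. B * \<bar>b s\<bar>) summable_on UNIV"
    using assms(2) by (simp add: is_l1_def summable_on_cmult_right)
qed (simp_all add: abs_mult mult_right_mono assms(1))

lemma conv_integrand_summable:
  assumes "\<And>x. \<bar>a x\<bar> \<le> B" "is_l1 b"
  shows "(\<lambda>s. a (t - s) * b s) summable_on UNIV"
  using abs_summable_summable[of "\<lambda>s. a (t - s) * b s" UNIV]
    conv_integrand_abs_summable[of a, OF assms] by (simp only: real_norm_def)

lemma conv_integrand_summable_finite_supp:
  fixes a b :: "'g::group_add \<Rightarrow> real"
  assumes "finite (supp b)"
  shows "(\<lambda>s. a (t - s) * b s) summable_on UNIV"
  using assms
  by (intro summable_on_cong_neutral[where S="supp b" and T=UNIV, THEN iffD1]) (auto simp: supp_def)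

lemma abs_conv_le:
  assumes "\<And>x. \<bar>a x\<bar> \<le> B" "is_l1 b"
  shows "\<bar>conv a b t\<bar> \<le> B * norm1 b"
proof -
  have "\<bar>conv a b t\<bar> \<le> (\<Sum>\<^sub>\<infinity>s. \<bar>a (t - s) * b s\<bar>)"
    unfolding conv_def
    using norm_infsum_bound[of "\<lambda>s. a (t - s) * b s" UNIV]
      conv_integrand_abs_summable[of a, OF assms] by simp
  also have "\<dots> \<le> (\<Sum>\<^sub>\<infinity>s. B * \<bar>b s\<bar>)"
  proof (rule infsum_mono)
    show "(\<lambda>s. B * \<bar>b s\<bar>) summable_on UNIV"
      using assms(2) by (simp add: is_l1_def summable_on_cmult_right)
  qed (use conv_integrand_abs_summable[of a, OF assms] in
      \<open>simp_all add: abs_mult mult_right_mono assms(1)\<close>)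
  also have "\<dots> = B * norm1 b"
    using assms(2) by (simp add: norm1_def is_l1_def infsum_cmult_right)
  finally show ?thesis .
qed

lemma conv_finite_supp_right:
  assumes "finite (supp b)"
  shows "conv a b t = (\<Sum>s\<in>supp b. a (t - s) * b s)"
proof -
  have "conv a b t = (\<Sum>\<^sub>\<infinity>s\<in>supp b. a (t - s) * b s)"
    unfolding conv_def by (rule infsum_cong_neutral) (auto simp: supp_def)
  then show ?thesis using assms by simp
qed

lemma conv_finite_supp_left:
  assumes "finite (supp a)"
  shows "conv a b t = (\<Sum>u\<in>supp a. a u * b (- u + t))"
proof -
  have "conv a b t = (\<Sum>\<^sub>\<infinity>u. a u * b (- u + t))"
    unfolding conv_def
    by (rule infsum_reindex_bij_witness[of UNIV "\<lambda>u. - u + t" "\<lambda>s. t - s"])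
      (auto simp: diff_conv_add_uminus minus_add add.assoc simp del: add_uminus_conv_diff)
  also have "\<dots> = (\<Sum>\<^sub>\<infinity>u\<in>supp a. a u * b (- u + t))"
    by (rule infsum_cong_neutral) (auto simp: supp_def)
  finally show ?thesis using assms by simp
qed

lemma conv_add_left:
  assumes "\<And>x. \<bar>a x\<bar> \<le> A" "\<And>x. \<bar>b x\<bar> \<le> B" "is_l1 c"
  shows "conv (\<lambda>t. a t + b t) c s = conv a c s + conv b c s"
  unfolding conv_def distrib_right
  using assms by (intro infsum_add conv_integrand_summable)

lemma conv_sum_left:
  assumes "finite I" "\<And>i. i \<in> I \<Longrightarrow> (\<lambda>s. a i (t - s) * b s) summable_on UNIV"
  shows "conv (\<lambda>r. \<Sum>i\<in>I. a i r) b t = (\<Sum>i\<in>I. conv (a i) b t)"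
  unfolding conv_def sum_distrib_right using assms by (rule infsum_sum)

lemma conv_sum_right:
  assumes "finite I" "\<And>i. i \<in> I \<Longrightarrow> (\<lambda>s. a (t - s) * b i s) summable_on UNIV"
  shows "conv a (\<lambda>r. \<Sum>i\<in>I. b i r) t = (\<Sum>i\<in>I. conv a (b i) t)"
  unfolding conv_def sum_distrib_left using assms by (rule infsum_sum)

lemma conv_mat_one:
  fixes a :: "'g::group_add \<Rightarrow> real"
  shows "conv a (mat_one k m) t = (if k = m then a t else 0)"
proof (cases "k = m")
  case True
  then have "supp (mat_one k m :: 'g \<Rightarrow> real) = {0}"
    by (auto simp: supp_def mat_one_def)
  with True show ?thesis
    using conv_finite_supp_right[of "mat_one k m" a t] by (simp add: mat_one_def)
qed (simp add: conv_def mat_one_def)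

lemma is_l1_conv_finite_supp_right:
  assumes "is_l1 F" "finite (supp G)"
  shows "is_l1 (conv F G)"
proof -
  have "conv F G = (\<lambda>w. \<Sum>u\<in>supp G. F (w - u) * G u)"
    using assms(2) by (simp add: conv_finite_supp_right fun_eq_iff)
  moreover have "is_l1 (\<lambda>w. \<Sum>u\<in>supp G. F (w - u) * G u)"
    using assms by (intro is_l1_sum is_l1_mult_right is_l1_reindex[OF bij_diff_right])
  ultimately show ?thesis by simp
qed

lemma is_l1_conv_finite_supp_left:
  assumes "finite (supp G)" "is_l1 F"
  shows "is_l1 (conv G F)"
proof -
  have "conv G F = (\<lambda>w. \<Sum>u\<in>supp G. F (- u + w) * G u)"
    using assms(1) by (simp add: conv_finite_supp_left fun_eq_iff mult.commute)
  moreover have "is_l1 (\<lambda>w. \<Sum>u\<in>supp G. F (- u + w) * G u)"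
    using assms by (intro is_l1_sum is_l1_mult_right is_l1_reindex[OF bij_plus])
  ultimately show ?thesis by simp
qed

lemma conv_assoc_l1_finite_supp:
  fixes a F G :: "'g::group_add \<Rightarrow> real"
  assumes "\<And>x. \<bar>a x\<bar> \<le> B" "is_l1 F" "finite (supp G)"
  shows "conv (conv a F) G t = conv a (conv F G) t"
proof -
  have shift: "conv a F (t - u) = (\<Sum>\<^sub>\<infinity>w. a (t - w) * F (w - u))" for u
    unfolding conv_def
    by (rule infsum_reindex_bij_witness[of UNIV "\<lambda>w. w - u" "\<lambda>v. v + u"])
      (auto simp: diff_conv_add_uminus minus_add add.assoc simp del: add_uminus_conv_diff)
  have summable: "(\<lambda>w. a (t - w) * F (w - u) * G u) summable_on UNIV" for u
    using assms(1) is_l1_reindex[OF bij_diff_right assms(2)]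
    by (intro summable_on_cmult_left conv_integrand_summable)
  have "conv (conv a F) G t = (\<Sum>u\<in>supp G. conv a F (t - u) * G u)"
    using assms(3) by (rule conv_finite_supp_right)
  also have "\<dots> = (\<Sum>u\<in>supp G. \<Sum>\<^sub>\<infinity>w. a (t - w) * F (w - u) * G u)"
    by (simp add: shift infsum_cmult_left')
  also have "\<dots> = (\<Sum>\<^sub>\<infinity>w. \<Sum>u\<in>supp G. a (t - w) * F (w - u) * G u)"
    using assms(3) summable by (rule infsum_sum[symmetric])
  also have "\<dots> = conv a (conv F G) t"
    using assms(3) by (simp add: conv_def[of a] conv_finite_supp_right sum_distrib_left mult.assoc)
  finally show ?thesis .
qed

lemma conv_assoc_finite_supp_l1:
  fixes a F G :: "'g::group_add \<Rightarrow> real"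
  assumes "\<And>x. \<bar>a x\<bar> \<le> B" "finite (supp G)" "is_l1 F"
  shows "conv (conv a G) F t = conv a (conv G F) t"
proof -
  have shift: "(\<Sum>\<^sub>\<infinity>v. a (t - v - u) * F v) = (\<Sum>\<^sub>\<infinity>w. a (t - w) * F (- u + w))" for u
    by (rule infsum_reindex_bij_witness[of UNIV "\<lambda>w. - u + w" "\<lambda>v. u + v"])
      (auto simp: diff_conv_add_uminus minus_add add.assoc simp del: add_uminus_conv_diff)
  have summable: "(\<lambda>v. a (t - v - u) * F v * G u) summable_on UNIV" for u
  proof -
    have "(\<lambda>v. a (t - v - u) * F v) summable_on UNIV"
      using conv_integrand_summable[of "\<lambda>x. a (x - u)" B F t] assms(1,3) by simp
    then show ?thesis by (rule summable_on_cmult_left)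
  qed
  have summable_shifted: "(\<lambda>w. a (t - w) * F (- u + w) * G u) summable_on UNIV" for u
    using assms(1) is_l1_reindex[OF bij_plus assms(3)]
    by (intro summable_on_cmult_left conv_integrand_summable)
  have "conv (conv a G) F t = (\<Sum>\<^sub>\<infinity>v. \<Sum>u\<in>supp G. a (t - v - u) * F v * G u)"
    using assms(2)
    by (simp add: conv_def[of "conv a G"] conv_finite_supp_right sum_distrib_left ac_simps)
  also have "\<dots> = (\<Sum>u\<in>supp G. \<Sum>\<^sub>\<infinity>v. a (t - v - u) * F v * G u)"
    using assms(2) summable by (rule infsum_sum)
  also have "\<dots> = (\<Sum>u\<in>supp G. \<Sum>\<^sub>\<infinity>w. a (t - w) * F (- u + w) * G u)"
    by (simp only: infsum_cmult_left' shift)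
  also have "\<dots> = (\<Sum>\<^sub>\<infinity>w. \<Sum>u\<in>supp G. a (t - w) * F (- u + w) * G u)"
    using assms(2) summable_shifted by (rule infsum_sum[symmetric])
  also have "\<dots> = conv a (conv G F) t"
    using assms(2) by (simp add: conv_def[of a] conv_finite_supp_left sum_distrib_left ac_simps)
  finally show ?thesis .
qed

section \<open>Row vectors times matrices\<close>

definition vec_conv ::
    "nat \<Rightarrow> ('g::group_add \<Rightarrow> nat \<Rightarrow> real) \<Rightarrow> (nat \<Rightarrow> nat \<Rightarrow> 'g \<Rightarrow> real) \<Rightarrow> 'g \<Rightarrow> nat \<Rightarrow> real" where
  "vec_conv n d F = (\<lambda>s m. \<Sum>k<n. conv (\<lambda>t. d t k) (F k m) s)"

lemma vec_conv_cong:
  assumes "\<And>t k. k < n \<Longrightarrow> d t k = e t k" "\<And>k. k < n \<Longrightarrow> F k m = G k m"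
  shows "vec_conv n d F s m = vec_conv n e G s m"
  unfolding vec_conv_def using assms
  by (intro sum.cong refl arg_cong2[where f="\<lambda>a b. conv a b s"]) auto

lemma vec_conv_zero: "vec_conv n (\<lambda>t k. 0) F s m = 0"
  by (simp add: vec_conv_def conv_def)

lemma vec_conv_add:
  assumes "\<And>t k. k < n \<Longrightarrow> \<bar>d t k\<bar> \<le> A" "\<And>t k. k < n \<Longrightarrow> \<bar>e t k\<bar> \<le> B"
    and "\<And>k m. k < n \<Longrightarrow> m < n \<Longrightarrow> is_l1 (F k m)" "m < n"
  shows "vec_conv n (\<lambda>t k. d t k + e t k) F s m = vec_conv n d F s m + vec_conv n e F s m"
  unfolding vec_conv_def sum.distrib[symmetric] using assms
  by (intro sum.cong refl conv_add_left) auto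

lemma abs_vec_conv_le:
  assumes "\<And>t k. k < n \<Longrightarrow> \<bar>d t k\<bar> \<le> B" "\<And>k m. k < n \<Longrightarrow> m < n \<Longrightarrow> is_l1 (F k m)"
    and "m < n"
  shows "\<bar>vec_conv n d F s m\<bar> \<le> B * norm_1inf n F"
proof -
  have "\<bar>vec_conv n d F s m\<bar> \<le> (\<Sum>k<n. \<bar>conv (\<lambda>t. d t k) (F k m) s\<bar>)"
    by (simp add: vec_conv_def sum_abs)
  also have "\<dots> \<le> (\<Sum>k<n. B * norm1 (F k m))"
    using assms by (intro sum_mono abs_conv_le) auto
  also have "\<dots> \<le> B * norm_1inf n F"
  proof -
    have "0 \<le> B"
      using assms(1)[of m] assms(3) by fastforce
    moreover have "(\<Sum>k<n. norm1 (F k m)) \<le> norm_1inf n F"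
      unfolding norm_1inf_def using assms(3) by (intro Max_ge) auto
    ultimately show ?thesis
      by (simp add: sum_distrib_left[symmetric] mult_left_mono)
  qed
  finally show ?thesis .
qed

lemma vec_conv_assoc_l1_finite_supp:
  assumes "\<And>t k. k < n \<Longrightarrow> \<bar>d t k\<bar> \<le> B"
    and "\<And>k m. k < n \<Longrightarrow> m < n \<Longrightarrow> is_l1 (F k m)"
    and "\<And>k m. k < n \<Longrightarrow> m < n \<Longrightarrow> finite (supp (G k m))"
    and "m < n"
  shows "vec_conv n (vec_conv n d F) G s m = vec_conv n d (mat_mult n F G) s m"
proof -
  have "vec_conv n (vec_conv n d F) G s m
      = (\<Sum>j<n. \<Sum>k<n. conv (conv (\<lambda>t. d t k) (F k j)) (G j m) s)"
    using assms(3,4)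
    by (simp add: vec_conv_def conv_sum_left conv_integrand_summable_finite_supp)
  also have "\<dots> = (\<Sum>j<n. \<Sum>k<n. conv (\<lambda>t. d t k) (conv (F k j) (G j m)) s)"
    using assms by (intro sum.cong refl conv_assoc_l1_finite_supp) auto
  also have "\<dots> = (\<Sum>k<n. \<Sum>j<n. conv (\<lambda>t. d t k) (conv (F k j) (G j m)) s)"
    by (rule sum.swap)
  also have "\<dots> = vec_conv n d (mat_mult n F G) s m"
    unfolding vec_conv_def mat_mult_def using assms
    by (intro sum.cong refl conv_sum_right[symmetric] conv_integrand_summable
        is_l1_conv_finite_supp_right) auto
  finally show ?thesis .
qed

lemma vec_conv_assoc_finite_supp_l1:
  assumes "\<And>t k. k < n \<Longrightarrow> \<bar>c t k\<bar> \<le> B"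
    and "\<And>k m. k < n \<Longrightarrow> m < n \<Longrightarrow> finite (supp (G k m))"
    and "\<And>k m. k < n \<Longrightarrow> m < n \<Longrightarrow> is_l1 (F k m)"
    and "m < n"
  shows "vec_conv n (vec_conv n c G) F s m = vec_conv n c (mat_mult n G F) s m"
proof -
  have "vec_conv n (vec_conv n c G) F s m
      = (\<Sum>j<n. \<Sum>k<n. conv (conv (\<lambda>t. c t k) (G k j)) (F j m) s)"
    unfolding vec_conv_def using assms
    by (intro sum.cong refl conv_sum_left
        conv_integrand_summable[OF abs_conv_le[OF _ is_l1_finite_supp]]) auto
  also have "\<dots> = (\<Sum>j<n. \<Sum>k<n. conv (\<lambda>t. c t k) (conv (G k j) (F j m)) s)"
    using assms by (intro sum.cong refl conv_assoc_finite_supp_l1) auto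
  also have "\<dots> = (\<Sum>k<n. \<Sum>j<n. conv (\<lambda>t. c t k) (conv (G k j) (F j m)) s)"
    by (rule sum.swap)
  also have "\<dots> = vec_conv n c (mat_mult n G F) s m"
    unfolding vec_conv_def mat_mult_def using assms
    by (intro sum.cong refl conv_sum_right[symmetric] conv_integrand_summable
        is_l1_conv_finite_supp_left) auto
  finally show ?thesis .
qed

lemma vec_conv_mat_one: "m < n \<Longrightarrow> vec_conv n d mat_one s m = d s m"
  by (simp add: vec_conv_def conv_mat_one)

lemma of_int_vecmat_int:
  assumes "\<And>k. k < n \<Longrightarrow> finite (supp (A k m))" "m < n"
  shows "real_of_int (vecmat_int n c A s m)
    = vec_conv n (\<lambda>t k. real_of_int (c t k)) (\<lambda>k m t. real_of_int (A k m t)) s m"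
proof -
  have "supp (\<lambda>t. real_of_int (A k m t)) = supp (A k m)" for k
    by (simp add: supp_def)
  then show ?thesis
    using assms by (simp add: vecmat_int_def vec_conv_def conv_int_def conv_finite_supp_right)
qed

lemma phi_vec_conv:
  "phi n F y = (\<lambda>s m. if m < n then frac (vec_conv n (\<lambda>t k. real_of_int (y t k)) F s m) else 0)"
  unfolding phi_def vec_conv_def by simp

section \<open>The fibres of phi\<close>

lemma phi_eq_iff_vec_conv_diff_Ints:
  assumes "\<And>t k. k < n \<Longrightarrow> \<bar>real_of_int (y t k)\<bar> \<le> B"
    and "\<And>t k. k < n \<Longrightarrow> \<bar>real_of_int (y' t k) - real_of_int (y t k)\<bar> \<le> B"
    and "\<And>k m. k < n \<Longrightarrow> m < n \<Longrightarrow> is_l1 (F k m)"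
  shows "phi n F y' = phi n F y \<longleftrightarrow>
    (\<forall>s m. m < n \<longrightarrow> vec_conv n (\<lambda>t k. real_of_int (y' t k) - real_of_int (y t k)) F s m \<in> \<int>)"
proof -
  have "vec_conv n (\<lambda>t k. real_of_int (y' t k)) F s m
      = vec_conv n (\<lambda>t k. real_of_int (y t k)) F s m
        + vec_conv n (\<lambda>t k. real_of_int (y' t k) - real_of_int (y t k)) F s m" if "m < n" for s m
    using vec_conv_add[of n "\<lambda>t k. real_of_int (y t k)" B
        "\<lambda>t k. real_of_int (y' t k) - real_of_int (y t k)" B F m s] assms that
    by simp
  then show ?thesis
    by (auto simp: phi_vec_conv fun_eq_iff frac_eq_iff_diff_Ints)
qed

lemma Yset_le_Max:
  assumes "y \<in> Yset n M" "k < n"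
  shows "0 \<le> y t k" "y t k < Max (M ` {..<n})"
proof -
  have "M k \<le> Max (M ` {..<n})"
    using assms(2) by (intro Max_ge) auto
  moreover have "0 \<le> y t k" "y t k < M k"
    using assms unfolding Yset_def by auto
  ultimately show "0 \<le> y t k" "y t k < Max (M ` {..<n})"
    by auto
qed

lemma vec_conv_vecmat_int:
  fixes A :: "nat \<Rightarrow> nat \<Rightarrow> 'g::group_add \<Rightarrow> int"
  assumes A_fin: "\<And>k m. k < n \<Longrightarrow> m < n \<Longrightarrow> finite (supp (A k m))"
    and inv: "is_l1_inverse n (\<lambda>k m s. real_of_int (A k m s)) F"
    and c_bound: "\<And>t k. k < n \<Longrightarrow> \<bar>c t k\<bar> \<le> N" and "m < n"
  shows "vec_conv n (\<lambda>t k. real_of_int (vecmat_int n c A t k)) F s m = real_of_int (c s m)"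
proof -
  let ?A = "\<lambda>k m t. real_of_int (A k m t)"
  have "vec_conv n (\<lambda>t k. real_of_int (vecmat_int n c A t k)) F s m
      = vec_conv n (vec_conv n (\<lambda>t k. real_of_int (c t k)) ?A) F s m"
    using A_fin by (intro vec_conv_cong of_int_vecmat_int) auto
  also have "\<dots> = vec_conv n (\<lambda>t k. real_of_int (c t k)) (mat_mult n ?A F) s m"
    using A_fin c_bound inv \<open>m < n\<close>
    by (intro vec_conv_assoc_finite_supp_l1[where B="real_of_int N"])
      (auto simp: supp_def is_l1_inverse_def simp del: of_int_abs simp add: of_int_abs[symmetric])
  also have "\<dots> = vec_conv n (\<lambda>t k. real_of_int (c t k)) mat_one s m"
    by (rule vec_conv_cong) (use inv \<open>m < n\<close> in \<open>auto simp: is_l1_inverse_def\<close>)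
  also have "\<dots> = real_of_int (c s m)"
    using \<open>m < n\<close> by (rule vec_conv_mat_one)
  finally show ?thesis .
qed

lemma vecmat_int_vec_conv:
  fixes A :: "nat \<Rightarrow> nat \<Rightarrow> 'g::group_add \<Rightarrow> int"
  assumes A_fin: "\<And>k m. k < n \<Longrightarrow> m < n \<Longrightarrow> finite (supp (A k m))"
    and inv: "is_l1_inverse n (\<lambda>k m s. real_of_int (A k m s)) F"
    and d_bound: "\<And>t k. k < n \<Longrightarrow> \<bar>d t k\<bar> \<le> B"
    and c: "\<And>t k. k < n \<Longrightarrow> real_of_int (c t k) = vec_conv n d F t k" and "m < n"
  shows "real_of_int (vecmat_int n c A s m) = d s m"
proof -
  let ?A = "\<lambda>k m t. real_of_int (A k m t)"
  have "real_of_int (vecmat_int n c A s m) = vec_conv n (\<lambda>t k. real_of_int (c t k)) ?A s m"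
    using A_fin \<open>m < n\<close> by (intro of_int_vecmat_int) auto
  also have "\<dots> = vec_conv n (vec_conv n d F) ?A s m"
    by (rule vec_conv_cong) (simp_all add: c)
  also have "\<dots> = vec_conv n d (mat_mult n F ?A) s m"
    using d_bound inv A_fin \<open>m < n\<close>
    by (intro vec_conv_assoc_l1_finite_supp) (auto simp: supp_def is_l1_inverse_def)
  also have "\<dots> = vec_conv n d mat_one s m"
    by (rule vec_conv_cong) (use inv \<open>m < n\<close> in \<open>auto simp: is_l1_inverse_def\<close>)
  also have "\<dots> = d s m"
    using \<open>m < n\<close> by (rule vec_conv_mat_one)
  finally show ?thesis .
qed

lemma phi_eq_imp_shift:
  fixes A :: "nat \<Rightarrow> nat \<Rightarrow> 'g::group_add \<Rightarrow> int"
  assumes A_fin: "\<And>k m. k < n \<Longrightarrow> m < n \<Longrightarrow> finite (supp (A k m))"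
    and inv: "is_l1_inverse n (\<lambda>k m s. real_of_int (A k m s)) F"
    and bound: "real_of_int (Max (M ` {..<n})) * norm_1inf n F \<le> real_of_int N"
    and y: "y \<in> Yset n M" and y': "y' \<in> Yset n M" and phi: "phi n F y' = phi n F y"
  obtains c where "c \<in> Wset n N" "y' = (\<lambda>s k. y s k + vecmat_int n c A s k)"
proof -
  define Mb where "Mb = real_of_int (Max (M ` {..<n}))"
  define d where "d = (\<lambda>t k. real_of_int (y' t k) - real_of_int (y t k))"
  define c where "c s m = (if m < n then \<lfloor>vec_conv n d F s m\<rfloor> else 0)" for s m
  have F_l1: "\<And>k m. k < n \<Longrightarrow> m < n \<Longrightarrow> is_l1 (F k m)"
    using inv by (simp add: is_l1_inverse_def)
  have y_bound: "\<bar>real_of_int (y t k)\<bar> \<le> Mb" and d_bound: "\<bar>d t k\<bar> \<le> Mb" if "k < n" for t k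
    using Yset_le_Max[OF y that, of t] Yset_le_Max[OF y' that, of t] by (auto simp: Mb_def d_def)
  have c_eq: "real_of_int (c s m) = vec_conv n d F s m" if "m < n" for s m
  proof -
    have "vec_conv n d F s m \<in> \<int>"
      using phi that y_bound d_bound F_l1 phi_eq_iff_vec_conv_diff_Ints[of n y Mb y' F]
      by (simp add: d_def)
    then show ?thesis
      using that by (auto simp: c_def elim: Ints_cases)
  qed
  have "c \<in> Wset n N"
  proof -
    have "\<bar>real_of_int (c s m)\<bar> \<le> real_of_int N" if "m < n" for s m
      using abs_vec_conv_le[of n d Mb F m s] d_bound F_l1 that bound c_eq[OF that]
      by (simp add: Mb_def)
    then show ?thesis
      unfolding Wset_def c_def by (auto simp del: of_int_abs simp add: of_int_abs[symmetric])
  qed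
  moreover have "y' = (\<lambda>s k. y s k + vecmat_int n c A s k)"
  proof (intro ext)
    fix s m
    show "y' s m = y s m + vecmat_int n c A s m"
    proof (cases "m < n")
      case True
      have "real_of_int (vecmat_int n c A s m) = d s m"
        using A_fin inv d_bound c_eq True by (rule vecmat_int_vec_conv)
      then show ?thesis
        by (simp add: d_def)
    next
      case False
      then show ?thesis
        using y y' by (simp add: Yset_def vecmat_int_def)
    qed
  qed
  ultimately show ?thesis by (rule that)
qed

lemma vecmat_int_zero: "vecmat_int n (\<lambda>s k. 0) A = (\<lambda>s k. 0)"
  by (simp add: vecmat_int_def conv_int_def fun_eq_iff)

lemma shift_imp_phi_eq:
  fixes A :: "nat \<Rightarrow> nat \<Rightarrow> 'g::group_add \<Rightarrow> int"
  assumes A_fin: "\<And>k m. k < n \<Longrightarrow> m < n \<Longrightarrow> finite (supp (A k m))"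
    and inv: "is_l1_inverse n (\<lambda>k m s. real_of_int (A k m s)) F"
    and c: "c \<in> Wset n N" "c \<noteq> (\<lambda>s k. 0)"
    and y: "y \<in> Yset n M" and y': "(\<lambda>s k. y s k + vecmat_int n c A s k) \<in> Yset n M"
  shows "(\<lambda>s k. y s k + vecmat_int n c A s k) \<noteq> y"
    and "phi n F (\<lambda>s k. y s k + vecmat_int n c A s k) = phi n F y"
proof -
  let ?y' = "\<lambda>s k. y s k + vecmat_int n c A s k"
  have c_bound: "\<And>t k. k < n \<Longrightarrow> \<bar>c t k\<bar> \<le> N"
    using c(1) by (simp add: Wset_def)
  have shift_coeffs:
    "vec_conv n (\<lambda>t k. real_of_int (vecmat_int n c A t k)) F s m = real_of_int (c s m)"
    if "m < n" for s m
    using A_fin inv c_bound that by (rule vec_conv_vecmat_int)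
  show "?y' \<noteq> y"
  proof
    assume "?y' = y"
    then have "vecmat_int n c A = (\<lambda>s k. 0)"
      by (simp add: fun_eq_iff)
    then have "real_of_int (c s m) = 0" if "m < n" for s m
      using shift_coeffs[OF that, of s] by (simp add: vec_conv_zero)
    moreover have "c s m = 0" if "\<not> m < n" for s m
      using c(1) that by (simp add: Wset_def)
    ultimately show False
      using c(2) by (auto simp: fun_eq_iff)
  qed
  show "phi n F ?y' = phi n F y"
  proof (subst phi_eq_iff_vec_conv_diff_Ints)
    show "\<bar>real_of_int (y t k)\<bar> \<le> real_of_int (Max (M ` {..<n}))"
      and "\<bar>real_of_int (?y' t k) - real_of_int (y t k)\<bar> \<le> real_of_int (Max (M ` {..<n}))"
      if "k < n" for t k
      using Yset_le_Max[OF y that, of t] Yset_le_Max[OF y' that, of t] by auto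
  qed (use inv in \<open>auto simp: is_l1_inverse_def shift_coeffs\<close>)
qed

lemma fibre_nontrivial_iff_shift:
  fixes A :: "nat \<Rightarrow> nat \<Rightarrow> 'g::group_add \<Rightarrow> int"
  assumes A_fin: "\<And>k m. k < n \<Longrightarrow> m < n \<Longrightarrow> finite (supp (A k m))"
    and inv: "is_l1_inverse n (\<lambda>k m s. real_of_int (A k m s)) F"
    and bound: "real_of_int (Max (M ` {..<n})) * norm_1inf n F \<le> real_of_int N"
    and y: "y \<in> Yset n M"
  shows "(\<exists>y'\<in>Yset n M. y' \<noteq> y \<and> phi n F y' = phi n F y)
    \<longleftrightarrow> (\<exists>c\<in>Vset n N. (\<lambda>s k. y s k + vecmat_int n c A s k) \<in> Yset n M)"
proof
  assume "\<exists>y'\<in>Yset n M. y' \<noteq> y \<and> phi n F y' = phi n F y"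
  then obtain y' where y': "y' \<in> Yset n M" "y' \<noteq> y" "phi n F y' = phi n F y"
    by blast
  then obtain c where c: "c \<in> Wset n N" "y' = (\<lambda>s k. y s k + vecmat_int n c A s k)"
    using phi_eq_imp_shift[OF A_fin inv bound y] by metis
  moreover have "c \<noteq> (\<lambda>s k. 0)"
    using c y' by (auto simp: vecmat_int_zero)
  ultimately show "\<exists>c\<in>Vset n N. (\<lambda>s k. y s k + vecmat_int n c A s k) \<in> Yset n M"
    using y' by (auto simp: Vset_def)
next
  assume "\<exists>c\<in>Vset n N. (\<lambda>s k. y s k + vecmat_int n c A s k) \<in> Yset n M"
  then obtain c where "c \<in> Wset n N" "c \<noteq> (\<lambda>s k. 0)"
    and "(\<lambda>s k. y s k + vecmat_int n c A s k) \<in> Yset n M"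
    by (auto simp: Vset_def)
  with shift_imp_phi_eq[OF A_fin inv _ _ y]
  show "\<exists>y'\<in>Yset n M. y' \<noteq> y \<and> phi n F y' = phi n F y"
    by blast
qed

lemma finite_supp_mat_star_fmat:
  assumes "finite (supp (g m k))"
  shows "finite (supp (mat_star (fmat M g) k m))"
proof -
  have "supp (mat_star (fmat M g) k m) \<subseteq> insert 0 (uminus ` supp (g m k))"
  proof
    fix s
    assume "s \<in> supp (mat_star (fmat M g) k m)"
    then have "s = 0 \<or> g m k (- s) \<noteq> 0"
      by (auto simp: supp_def mat_star_def star_def fmat_def split: if_splits)
    then show "s \<in> insert 0 (uminus ` supp (g m k))"
      by (auto simp: supp_def intro: image_eqI[where x="- s"])
  qed
  then show ?thesis
    using assms by (rule finite_subset[OF _ finite_insert[THEN iffD2, OF finite_imageI]])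
qed

theorem lemma4p2:
  fixes n :: nat and M :: "nat \<Rightarrow> int"
    and g :: "nat \<Rightarrow> nat \<Rightarrow> 'g::{group_add,countable} \<Rightarrow> int"
    and P :: "'g set" and Finv :: "nat \<Rightarrow> nat \<Rightarrow> 'g \<Rightarrow> real" and N :: int
  assumes "infinite (UNIV :: 'g set)"
    and "\<forall>k<n. \<forall>m<n. finite (supp (g k m))"
    and "\<forall>k<n. 0 < M k"
    and "\<forall>k<n. (\<Sum>m<n. norm1_int (g k m)) < M k"
    and "0 \<notin> P" and "\<forall>a\<in>P. \<forall>b\<in>P. a + b \<in> P"
    and "\<forall>k<n. \<forall>m<n. supp (g k m) \<subseteq> P"
    and "is_l1_inverse n (mat_star (\<lambda>k m s. real_of_int (fmat M g k m s))) Finv"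
    and "real_of_int (Max (M ` {..<n})) * norm_1inf n Finv \<le> real_of_int N"
  shows "{y \<in> Yset n M.
            infinite {y' \<in> Yset n M. phi n Finv y' = phi n Finv y}
            \<or> 1 < card {y' \<in> Yset n M. phi n Finv y' = phi n Finv y}}
         = fst ` Zset n M g N"
proof -
  \<comment> \<open>The hypotheses on Gamma, on P and on the size of M only serve to make f
    invertible in l^1, which is assumed here directly.\<close>
  let ?A = "mat_star (fmat M g)"
  have A_fin: "finite (supp (?A k m))" if "k < n" "m < n" for k m
    using assms(2) that by (intro finite_supp_mat_star_fmat) auto
  have inv: "is_l1_inverse n (\<lambda>k m s. real_of_int (?A k m s)) Finv"
    using assms(8) by (simp add: mat_star_def[abs_def] star_def[abs_def])
  have fibre: "y \<in> Yset n M \<Longrightarrow>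
      (infinite {y' \<in> Yset n M. phi n Finv y' = phi n Finv y}
        \<or> 1 < card {y' \<in> Yset n M. phi n Finv y' = phi n Finv y})
      \<longleftrightarrow> (\<exists>c\<in>Vset n N. (\<lambda>s k. y s k + vecmat_int n c ?A s k) \<in> Yset n M)" for y
    by (subst infinite_or_card_gt_1_iff[where x=y])
      (auto simp: fibre_nontrivial_iff_shift[OF A_fin inv assms(9), symmetric])
  have "fst ` Zset n M g N
      = {y \<in> Yset n M. \<exists>c\<in>Vset n N. (\<lambda>s k. y s k + vecmat_int n c ?A s k) \<in> Yset n M}"
    by (force simp: Zset_def)
  with fibre show ?thesis
    by blast
qed

end
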